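(* Consider the following remote estimation problem. Let $a\in\mathbb{R}$ and $x(t+1)=ax(t)+w(t)$, $x(0)=x_0$, where $\{w(t)\}$ are i.i.d. with a symmetric unimodal density with finite second moment. A channel $c(t)\in\{0,1\}$ is a Markov chain with $\mathbb{P}(c(t+1)=1\mid c(t)=0)=p_{01}$, $\mathbb{P}(c(t+1)=1\mid c(t)=1)=p_{11}$, $p_{01},p_{11}\in(0,1)$. The sensor chooses $u(t)\in\{0,1\}$; the estimator receives $y(t)=x(t)$ if $u(t)=1$ and $c(t)=1$, and $y(t)=\Xi$ otherwise. The sensor learns $c(t)$ at time $t+1$ only if $u(t)=1$, and $b(t)$ denotes its conditional probability that $c(t)=1$ given its information (updated as $b(t+1)=p_{11}$ if $u(t)=1,c(t)=1$; $p_{01}$ if $u(t)=1,c(t)=0$; $p_{11}b(t)+p_{01}(1-b(t))$ if $u(t)=0$). For $\lambda>0$, $\beta\in(0,1)$ let the cost of a pair of strategies be $\mathbb{E}\big[\sum_{t\ge0}\beta^t((x(t)-\hat x(t))^2+\lambda u(t))\big]$. Define $v(-1)=x_0$, $v(t)=av(t-1)$ if $y(t)=\Xi$ and $v(t)=y(t)$ otherwise, and $e(t)=x(t)-av(t-1)$. Then for any scheduling strategy of the form $u(t)=f_t(x(t),b(t),y(0),\dots,y(t-1))$ and estimation strategy of the form $\hat x(t)=g_t(y(0),\dots,y(t))$, there exist equivalent scheduling and estimation strategies of the form $$u(t)=\tilde f_t\big(e(t),b(t),y(0),\dots,y(t-1)\big),\qquad \hat x(t)=\tilde g_t\big(y(0),\dots,y(t)\big)+v(t).$$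 Conversely, for any strategies of the latter form there exist equivalent strategies of the former form.
   Context: All maps are measurable. $\Xi$ is a symbol meaning no packet received. Two pairs of (scheduling, estimation) strategies are equivalent if they yield the same expected discounted cost $\mathbb{E}\big[\sum_{t\ge0}\beta^t((x(t)-\hat x(t))^2+\lambda u(t))\big]$. *)

theory Defs
  imports "HOL-Probability.Probability"
begin

text \<open>Observation space: real option, where None stands for the symbol Xi (no packet).
  Sigma algebra: generated by {None} and images Some ` B of Borel sets B.\<close>
definition obs_space :: "real option measure" where
  "obs_space = sigma UNIV (insert {None} ((\<lambda>B. Some ` B) ` sets borel))"

primrec xproc :: "real \<Rightarrow> real \<Rightarrow> (nat \<Rightarrow> 'a \<Rightarrow> real) \<Rightarrow> nat \<Rightarrow> 'a \<Rightarrow> real" where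
  "xproc a x0 w 0 \<omega> = x0"
| "xproc a x0 w (Suc t) \<omega> = a * xproc a x0 w t \<omega> + w t \<omega>"

text \<open>vprev a x0 h t = v(t-1) computed from the observations h 0, ..., h (t-1);
  v(-1) = x0, v(t) = a v(t-1) if y(t) = Xi, v(t) = y(t) otherwise.\<close>
primrec vprev :: "real \<Rightarrow> real \<Rightarrow> (nat \<Rightarrow> real option) \<Rightarrow> nat \<Rightarrow> real" where
  "vprev a x0 h 0 = x0"
| "vprev a x0 h (Suc t) = (case h t of None \<Rightarrow> a * vprev a x0 h t | Some y \<Rightarrow> y)"

text \<open>Scheduling strategy: f t z b h gives u(t) from (state-like argument z, belief b(t),
  observation history h = y(0..t-1) as a function on {..<t}).
  Estimation strategy: g t h gives the estimate from h = y(0..t) on {..t}.\<close>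
type_synonym sched = "nat \<Rightarrow> real \<Rightarrow> real \<Rightarrow> (nat \<Rightarrow> real option) \<Rightarrow> bool"
type_synonym estim = "nat \<Rightarrow> (nat \<Rightarrow> real option) \<Rightarrow> real"

definition sched_meas :: "sched \<Rightarrow> bool" where
  "sched_meas f \<longleftrightarrow> (\<forall>t. (\<lambda>(z, b, h). f t z b h) \<in>
     borel \<Otimes>\<^sub>M borel \<Otimes>\<^sub>M PiM {..<t} (\<lambda>_. obs_space) \<rightarrow>\<^sub>M count_space UNIV)"

definition est_meas :: "estim \<Rightarrow> bool" where
  "est_meas g \<longleftrightarrow> (\<forall>t. g t \<in> PiM {..<Suc t} (\<lambda>_. obs_space) \<rightarrow>\<^sub>M borel)"

text \<open>Closed loop under sensor map S: returns (b(t), y(0..t-1) restricted to {..<t}).\<close>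
primrec loop :: "real \<Rightarrow> real \<Rightarrow> real \<Rightarrow> real \<Rightarrow> real \<Rightarrow> (nat \<Rightarrow> 'a \<Rightarrow> real)
    \<Rightarrow> (nat \<Rightarrow> 'a \<Rightarrow> bool) \<Rightarrow> sched \<Rightarrow> nat \<Rightarrow> 'a \<Rightarrow> real \<times> (nat \<Rightarrow> real option)" where
  "loop a x0 p01 p11 b0 w c S 0 \<omega> = (b0, restrict (\<lambda>_. None) {..<0})"
| "loop a x0 p01 p11 b0 w c S (Suc t) \<omega> =
    (let b = fst (loop a x0 p01 p11 b0 w c S t \<omega>);
         h = snd (loop a x0 p01 p11 b0 w c S t \<omega>);
         xt = xproc a x0 w t \<omega>;
         u = S t xt b h
     in (if u then (if c t \<omega> then p11 else p01) else p11 * b + p01 * (1 - b),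
         h(t := (if u \<and> c t \<omega> then Some xt else None))))"

definition cost :: "'a measure \<Rightarrow> real \<Rightarrow> real \<Rightarrow> real \<Rightarrow> real \<Rightarrow> real \<Rightarrow> real \<Rightarrow> real
    \<Rightarrow> (nat \<Rightarrow> 'a \<Rightarrow> real) \<Rightarrow> (nat \<Rightarrow> 'a \<Rightarrow> bool) \<Rightarrow> sched \<Rightarrow> estim \<Rightarrow> ennreal" where
  "cost M a x0 p01 p11 b0 lam \<beta> w c S E =
    (\<integral>\<^sup>+ \<omega>. (\<Sum>t. ennreal (\<beta> ^ t *
        ((xproc a x0 w t \<omega> - E t (snd (loop a x0 p01 p11 b0 w c S (Suc t) \<omega>)))\<^sup>2
         + lam * of_bool (S t (xproc a x0 w t \<omega>)
                              (fst (loop a x0 p01 p11 b0 w c S t \<omega>))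
                              (snd (loop a x0 p01 p11 b0 w c S t \<omega>)))))) \<partial>M)"

text \<open>Strategies of the second form: u(t) = ft(e(t), b(t), y(0..t-1)) with
  e(t) = x(t) - a v(t-1), and xhat(t) = gt(y(0..t)) + v(t).\<close>
definition innov_sched :: "real \<Rightarrow> real \<Rightarrow> sched \<Rightarrow> sched" where
  "innov_sched a x0 ft = (\<lambda>t z b h. ft t (z - a * vprev a x0 h t) b h)"

definition innov_est :: "real \<Rightarrow> real \<Rightarrow> estim \<Rightarrow> estim" where
  "innov_est a x0 gt = (\<lambda>t h. gt t h + vprev a x0 h (Suc t))"

end

theory Submission
  imports Defs
begin

text \<open>Since v(t-1) is a measurable function of y(0), ..., y(t-1), subtracting a v(t-1) from the
  scheduler's state argument and v(t) from the estimate maps the strategies of the first form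
  bijectively onto those of the second, preserving measurability. Every pair of either form is
  therefore literally a pair of the other form, so the costs coincide.\<close>

lemma sets_obs_space: "sets obs_space = sigma_sets UNIV (insert {None} ((\<lambda>B. Some ` B) ` sets borel))"
  unfolding obs_space_def by (rule sets_measure_of) auto

lemma space_obs_space [simp]: "space obs_space = UNIV"
  unfolding obs_space_def by (rule space_measure_of) auto

lemma None_in_obs_space: "{None} \<in> sets obs_space"
  unfolding sets_obs_space by (rule sigma_sets.Basic) auto

lemma Some_image_in_obs_space: "B \<in> sets borel \<Longrightarrow> Some ` B \<in> sets obs_space"
  unfolding sets_obs_space by (rule sigma_sets.Basic) auto

lemma pred_eq_None_obs_space [measurable]: "Measurable.pred obs_space (\<lambda>y. y = None)"
proof -
  have "{y \<in> space obs_space. y = None} = {None}" by auto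
  then show ?thesis unfolding pred_def using None_in_obs_space by simp
qed

lemma measurable_the_obs_space [measurable]: "the \<in> borel_measurable obs_space"
proof (rule measurableI)
  fix A :: "real set" assume A: "A \<in> sets borel"
  have "the -` A \<inter> space obs_space = Some ` A \<union> (if the None \<in> A then {None} else {})"
  proof (rule set_eqI)
    fix y :: "real option"
    show "y \<in> the -` A \<inter> space obs_space \<longleftrightarrow> y \<in> Some ` A \<union> (if the None \<in> A then {None} else {})"
      by (cases y) auto
  qed
  also have "\<dots> \<in> sets obs_space"
    using None_in_obs_space Some_image_in_obs_space[OF A] by (auto intro: sets.insert_in_sets)
  finally show "the -` A \<inter> space obs_space \<in> sets obs_space" .
qed auto

lemma measurable_vprev:
  assumes "{..<n} \<subseteq> I"
  shows "(\<lambda>h. vprev a x0 h n) \<in> borel_measurable (PiM I (\<lambda>_. obs_space))"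
  using assms
proof (induction n)
  case 0
  then show ?case by simp
next
  case (Suc n)
  then have "n \<in> I" and "{..<n} \<subseteq> I" by auto
  with Suc.IH have IH: "(\<lambda>h. vprev a x0 h n) \<in> borel_measurable (PiM I (\<lambda>_. obs_space))"
    by blast
  have "(\<lambda>h. vprev a x0 h (Suc n)) = (\<lambda>h. if h n = None then a * vprev a x0 h n else the (h n))"
    by (auto split: option.split)
  with \<open>n \<in> I\<close> IH show ?case by simp measurable
qed

lemma sched_meas_shift:
  assumes f: "sched_meas f"
    and d: "\<And>t. d t \<in> borel_measurable (PiM {..<t} (\<lambda>_. obs_space))"
  shows "sched_meas (\<lambda>t z b h. f t (z + d t h) b h)"
  unfolding sched_meas_def
proof
  fix t :: nat
  let ?D = "borel \<Otimes>\<^sub>M borel \<Otimes>\<^sub>M PiM {..<t} (\<lambda>_. obs_space)"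
  have "(\<lambda>(z :: real, b :: real, h). (z + d t h, b, h)) \<in> ?D \<rightarrow>\<^sub>M ?D"
    using d[of t] unfolding split_beta' by measurable
  moreover have "(\<lambda>(z, b, h). f t z b h) \<in> ?D \<rightarrow>\<^sub>M count_space UNIV"
    using f unfolding sched_meas_def by blast
  ultimately have "(\<lambda>(z, b, h). f t z b h) \<circ> (\<lambda>(z, b, h). (z + d t h, b, h))
      \<in> ?D \<rightarrow>\<^sub>M count_space UNIV"
    by (rule measurable_comp)
  then show "(\<lambda>(z, b, h). f t (z + d t h) b h) \<in> ?D \<rightarrow>\<^sub>M count_space UNIV"
    by (simp add: o_def split_beta')
qed

lemma est_meas_shift:
  assumes "est_meas g"
    and "\<And>t. d t \<in> borel_measurable (PiM {..<Suc t} (\<lambda>_. obs_space))"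
  shows "est_meas (\<lambda>t h. g t h + d t h)"
  using assms unfolding est_meas_def by (auto intro: borel_measurable_add)

lemma measurable_scaled_vprev:
  "(\<lambda>h. s * vprev a x0 h t) \<in> borel_measurable (PiM {..<t} (\<lambda>_. obs_space))"
  using measurable_vprev[OF order_refl] by measurable

lemma sched_meas_innov_sched: "sched_meas ft \<Longrightarrow> sched_meas (innov_sched a x0 ft)"
  using sched_meas_shift[OF _ measurable_scaled_vprev[of "- a" a x0]]
  by (simp add: innov_sched_def)

lemma est_meas_innov_est: "est_meas gt \<Longrightarrow> est_meas (innov_est a x0 gt)"
  using est_meas_shift[OF _ measurable_scaled_vprev[of 1 a x0]]
  by (simp add: innov_est_def del: vprev.simps)

lemma innov_sched_surj:
  assumes "sched_meas f"
  obtains ft where "sched_meas ft" and "innov_sched a x0 ft = f"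
proof
  show "sched_meas (\<lambda>t z b h. f t (z + a * vprev a x0 h t) b h)"
    by (rule sched_meas_shift[OF assms measurable_scaled_vprev])
qed (simp add: innov_sched_def)

lemma innov_est_surj:
  assumes "est_meas g"
  obtains gt where "est_meas gt" and "innov_est a x0 gt = g"
proof
  show "est_meas (\<lambda>t h. g t h + (- 1) * vprev a x0 h (Suc t))"
    by (rule est_meas_shift[OF assms measurable_scaled_vprev])
qed (simp add: innov_est_def del: vprev.simps)

theorem lemma2:
  fixes M :: "'a measure" and a x0 p01 p11 b0 lam \<beta> :: real
    and w :: "nat \<Rightarrow> 'a \<Rightarrow> real" and c :: "nat \<Rightarrow> 'a \<Rightarrow> bool" and \<phi> :: "real \<Rightarrow> real"
  assumes "prob_space M"
    and "\<And>t. w t \<in> borel_measurable M"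
    and "prob_space.indep_vars M (\<lambda>_. borel) w UNIV"
    and "\<And>t. distributed M lborel (w t) (\<lambda>z. ennreal (\<phi> z))"
    and "\<And>z. 0 \<le> \<phi> z" and "\<phi> \<in> borel_measurable borel"
    and "\<And>z. \<phi> (- z) = \<phi> z"
    and "\<And>z1 z2. 0 \<le> z1 \<Longrightarrow> z1 \<le> z2 \<Longrightarrow> \<phi> z2 \<le> \<phi> z1"
    and "integrable lborel (\<lambda>z. z\<^sup>2 * \<phi> z)"
    and "\<And>t. c t \<in> M \<rightarrow>\<^sub>M count_space UNIV"
    and "0 < p01" and "p01 < 1" and "0 < p11" and "p11 < 1"
    and "0 \<le> b0" and "b0 \<le> 1"
    and "measure M {\<omega> \<in> space M. c 0 \<omega>} = b0"
    and "\<And>t s. measure M {\<omega> \<in> space M. c (Suc t) \<omega> \<and> (\<forall>i\<le>t. c i \<omega> = s i)}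
              = (if s t then p11 else p01) * measure M {\<omega> \<in> space M. \<forall>i\<le>t. c i \<omega> = s i}"
    and "prob_space.indep_var M (PiM UNIV (\<lambda>_. borel)) (\<lambda>\<omega> t. w t \<omega>)
                                (PiM UNIV (\<lambda>_. borel)) (\<lambda>\<omega> t. of_bool (c t \<omega>) :: real)"
    and "0 < lam" and "0 < \<beta>" and "\<beta> < 1"
  shows "(\<forall>f g. sched_meas f \<and> est_meas g \<longrightarrow>
            (\<exists>ft gt. sched_meas ft \<and> est_meas gt \<and>
               cost M a x0 p01 p11 b0 lam \<beta> w c f g
               = cost M a x0 p01 p11 b0 lam \<beta> w c (innov_sched a x0 ft) (innov_est a x0 gt)))
       \<and> (\<forall>ft gt. sched_meas ft \<and> est_meas gt \<longrightarrow>
            (\<exists>f g. sched_meas f \<and> est_meas g \<and>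
               cost M a x0 p01 p11 b0 lam \<beta> w c (innov_sched a x0 ft) (innov_est a x0 gt)
               = cost M a x0 p01 p11 b0 lam \<beta> w c f g))"
proof (intro conjI allI impI)
  fix f g assume "sched_meas f \<and> est_meas g"
  then obtain ft gt where "sched_meas ft" "innov_sched a x0 ft = f"
    and "est_meas gt" "innov_est a x0 gt = g"
    using innov_sched_surj innov_est_surj by metis
  then show "\<exists>ft gt. sched_meas ft \<and> est_meas gt \<and>
      cost M a x0 p01 p11 b0 lam \<beta> w c f g
      = cost M a x0 p01 p11 b0 lam \<beta> w c (innov_sched a x0 ft) (innov_est a x0 gt)"
    by blast
next
  fix ft gt assume "sched_meas ft \<and> est_meas gt"
  then show "\<exists>f g. sched_meas f \<and> est_meas g \<and>
      cost M a x0 p01 p11 b0 lam \<beta> w c (innov_sched a x0 ft) (innov_est a x0 gt)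
      = cost M a x0 p01 p11 b0 lam \<beta> w c f g"
    using sched_meas_innov_sched est_meas_innov_est by blast
qed

end
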